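(* Let $f\in\mathrm{LC}$ satisfy (H$_1$), (H$_3$) and (H$_2^*$) there are $\alpha_1>0$ and $K\ge1$ with $\exp\big(\int_s^t\alpha(u)du\big)\le Ke^{-\alpha_1(t-s)}$ for $0\le s\le t$. Then for every $\tau\in\mathbb R$ the solutions of $\dot x=f(t,x)$ are uniformly ultimately bounded on $[\tau,\infty)$.
   Context: $\mathrm{LC}$: Borel measurable $f:\mathbb R\times\mathbb R^N\to\mathbb R^N$ such that for every compact $K$ there are $m^K,l^K\in L^1_{loc}$ with $|f(t,x)|\le m^K(t)$ and $|f(t,x)-f(t,y)|\le l^K(t)|x-y|$ for $x,y\in K$, a.e. $t$. (H$_1$): there exist $\alpha,\beta\in L^1_{loc}$ with $\beta\ge0$ such that $2\langle f(t,x),x\rangle\le\alpha(t)|x|^2+\beta(t)$ for a.e. $(t,x)\in\mathbb R^{1+N}$. (H$_3$): $\sup_{t\in\mathbb R}\int_{-r}^r\beta(s+t)ds<\infty$ for every $r>0$. Under (H$_1$) solutions of $\dot x=f(t,x)$, $x(r)=x_0$ exist on $[r,\infty)$; $S_f(t,r)x_0$ denotes their value at $t\ge r$. The solutions are uniformly ultimately bounded on $[\tau,\infty)$ if there is $c(\tau)>0$ such that for every $d>0$ there is $T(\tau,d)>0$ with $|S_f(t+r,r)x_0|\le c(\tau)$ whenever $r\ge\tau$, $t\ge T(\tau,d)$, $|x_0|\le d$. *)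

theory Defs
  imports "HOL-Analysis.Analysis"
begin

definition L1_loc :: "(real \<Rightarrow> real) \<Rightarrow> bool" where
  "L1_loc m \<longleftrightarrow> (\<forall>a b. m absolutely_integrable_on {a..b})"

definition LC :: "(real \<Rightarrow> 'a::euclidean_space \<Rightarrow> 'a) \<Rightarrow> bool" where
  "LC f \<longleftrightarrow>
     (\<lambda>p. f (fst p) (snd p)) \<in> borel_measurable borel \<and>
     (\<forall>K. compact K \<longrightarrow>
        (\<exists>m l. L1_loc m \<and> L1_loc l \<and>
           (AE t in lborel. \<forall>x\<in>K. \<forall>y\<in>K.
               norm (f t x) \<le> m t \<and> norm (f t x - f t y) \<le> l t * norm (x - y))))"

definition H1 :: "(real \<Rightarrow> 'a::euclidean_space \<Rightarrow> 'a) \<Rightarrow> (real \<Rightarrow> real) \<Rightarrow> (real \<Rightarrow> real) \<Rightarrow> bool" where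
  "H1 f \<alpha> \<beta> \<longleftrightarrow> L1_loc \<alpha> \<and> L1_loc \<beta> \<and> (\<forall>t. \<beta> t \<ge> 0) \<and>
     (AE p in (lborel :: (real \<times> 'a) measure).
        2 * (f (fst p) (snd p) \<bullet> snd p) \<le> \<alpha> (fst p) * (norm (snd p))\<^sup>2 + \<beta> (fst p))"

definition H3 :: "(real \<Rightarrow> real) \<Rightarrow> bool" where
  "H3 \<beta> \<longleftrightarrow> (\<forall>r>0. bdd_above (range (\<lambda>t. integral {-r..r} (\<lambda>s. \<beta> (s + t)))))"

definition H2star :: "(real \<Rightarrow> real) \<Rightarrow> bool" where
  "H2star \<alpha> \<longleftrightarrow> (\<exists>\<alpha>1>0. \<exists>K\<ge>1. \<forall>s t. 0 \<le> s \<and> s \<le> t \<longrightarrow>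
       exp (integral {s..t} \<alpha>) \<le> K * exp (- \<alpha>1 * (t - s)))"

definition is_solution :: "(real \<Rightarrow> 'a::euclidean_space \<Rightarrow> 'a) \<Rightarrow> real \<Rightarrow> 'a \<Rightarrow> (real \<Rightarrow> 'a) \<Rightarrow> bool" where
  "is_solution f r x0 x \<longleftrightarrow> x r = x0 \<and> continuous_on {r..} x \<and>
     (\<forall>t\<ge>r. (\<lambda>s. f s (x s)) absolutely_integrable_on {r..t} \<and>
             ((\<lambda>s. f s (x s)) has_integral (x t - x0)) {r..t})"

text \<open>Uniform ultimate boundedness on [tau, infinity) (for all solutions; under LC they are unique).\<close>
definition uub :: "(real \<Rightarrow> 'a::euclidean_space \<Rightarrow> 'a) \<Rightarrow> real \<Rightarrow> bool" where
  "uub f \<tau> \<longleftrightarrow> (\<exists>c>0. \<forall>d>0. \<exists>T>0. \<forall>r x0 x t.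
      r \<ge> \<tau> \<longrightarrow> t \<ge> T \<longrightarrow> norm x0 \<le> d \<longrightarrow> is_solution f r x0 x \<longrightarrow> norm (x (t + r)) \<le> c)"

end

theory Submission
  imports Defs
begin

text \<open>Along a solution, \<open>y = |x|\<^sup>2\<close> satisfies \<open>y' \<le> \<alpha> y + \<beta>\<close> almost everywhere by (H1), so the
  integrating factor \<open>exp (- \<integral>\<alpha>)\<close> gives
  \<open>|x t|\<^sup>2 \<le> exp (\<integral>\<^sub>s\<^sup>t \<alpha>) |x s|\<^sup>2 + \<integral>\<^sub>s\<^sup>t exp (\<integral>\<^sub>u\<^sup>t \<alpha>) \<beta> u du\<close>.
  For \<open>s \<ge> 0\<close>, (H2*) makes the first term decay like \<open>K exp (- \<alpha>\<^sub>1 (t - s))\<close>; cutting \<open>[s, t]\<close>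
  into unit intervals, on each of which (H3) bounds \<open>\<integral>\<beta>\<close>, turns the second term into a convergent
  geometric series that does not depend on the initial data. Solutions starting before time 0 are
  first carried to time 0 by a crude bound on the compact window \<open>[min \<tau> 0, 0]\<close>.

  Since solutions are merely absolutely continuous, the product and chain rules are proved for
  indefinite integrals by a telescoping argument over fine partitions; and since (H1) holds only
  for almost every \<open>(t, x)\<close>, it is upgraded to all \<open>x\<close> via the continuity of \<open>f t\<close> provided
  by (LC).\<close>

section \<open>Absolutely continuous functions\<close>

text \<open>\<open>AC_deriv u u' a b\<close>: on \<open>[a, b]\<close>, \<open>u\<close> is the indefinite integral of the absolutely integrable
  \<open>u'\<close>, i.e. \<open>u\<close> is absolutely continuous with derivative \<open>u'\<close> almost everywhere.\<close>

definition AC_deriv :: "(real \<Rightarrow> 'a::euclidean_space) \<Rightarrow> (real \<Rightarrow> 'a) \<Rightarrow> real \<Rightarrow> real \<Rightarrow> bool" where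
  "AC_deriv u u' a b \<longleftrightarrow>
     u' absolutely_integrable_on {a..b} \<and> (\<forall>t\<in>{a..b}. u t = u a + integral {a..t} u')"

lemma AC_deriv_absolutely_integrable: "AC_deriv u u' a b \<Longrightarrow> u' absolutely_integrable_on {a..b}"
  unfolding AC_deriv_def by blast

lemma AC_deriv_integrable: "AC_deriv u u' a b \<Longrightarrow> u' integrable_on {a..b}"
  using AC_deriv_absolutely_integrable absolutely_integrable_on_def by blast

lemma AC_deriv_eq: "AC_deriv u u' a b \<Longrightarrow> t \<in> {a..b} \<Longrightarrow> u t = u a + integral {a..t} u'"
  unfolding AC_deriv_def by blast

lemma AC_deriv_diff:
  assumes "AC_deriv u u' a b" "a \<le> p" "p \<le> q" "q \<le> b"
  shows "u q - u p = integral {p..q} u'"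
proof -
  have "u' integrable_on {a..q}"
    using assms by (intro integrable_on_subinterval[OF AC_deriv_integrable[OF assms(1)]]) auto
  then have "integral {a..p} u' + integral {p..q} u' = integral {a..q} u'"
    using assms by (intro Henstock_Kurzweil_Integration.integral_combine) auto
  moreover have "u p = u a + integral {a..p} u'" "u q = u a + integral {a..q} u'"
    using assms by (intro AC_deriv_eq[OF assms(1)]; simp)+
  ultimately show ?thesis
    by (simp add: algebra_simps)
qed

lemma AC_deriv_subinterval:
  assumes "AC_deriv u u' a b" "a \<le> c" "d \<le> b"
  shows "AC_deriv u u' c d"
  unfolding AC_deriv_def
proof
  show "u' absolutely_integrable_on {c..d}"
  proof (rule absolutely_integrable_on_subinterval)
    show "u' absolutely_integrable_on {a..b}"
      by (rule AC_deriv_absolutely_integrable[OF assms(1)])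
  qed (use assms in auto)
  show "\<forall>t\<in>{c..d}. u t = u c + integral {c..t} u'"
  proof
    fix t assume "t \<in> {c..d}"
    then have "u t - u c = integral {c..t} u'"
      using assms by (intro AC_deriv_diff[OF assms(1)]) auto
    then show "u t = u c + integral {c..t} u'"
      by (simp add: algebra_simps)
  qed
qed

lemma AC_deriv_continuous:
  assumes "AC_deriv u u' a b"
  shows "continuous_on {a..b} u"
proof (rule continuous_on_eq)
  show "continuous_on {a..b} (\<lambda>t. u a + integral {a..t} u')"
    by (intro continuous_intros indefinite_integral_continuous_1 AC_deriv_integrable[OF assms])
qed (rule AC_deriv_eq[OF assms, symmetric])

lemma AC_deriv_integral:
  "k absolutely_integrable_on {a..b} \<Longrightarrow> AC_deriv (\<lambda>t. integral {a..t} k) k a b"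
  by (simp add: AC_deriv_def)

lemma abs_diff_le_if_increments_dominated:
  fixes \<Phi> M :: "real \<Rightarrow> real"
  assumes "a \<le> b" "\<delta> > 0"
    and \<delta>: "\<And>p q. a \<le> p \<Longrightarrow> p \<le> q \<Longrightarrow> q \<le> b \<Longrightarrow> q - p < \<delta> \<Longrightarrow>
           \<bar>\<Phi> q - \<Phi> p\<bar> \<le> \<epsilon> * (M q - M p)"
  shows "\<bar>\<Phi> b - \<Phi> a\<bar> \<le> \<epsilon> * (M b - M a)"
proof -
  obtain n :: nat where n: "(b - a) / \<delta> < n"
    using reals_Archimedean2 by blast
  moreover have "(b - a) / \<delta> \<ge> 0"
    using \<open>a \<le> b\<close> \<open>\<delta> > 0\<close> by simp
  ultimately have "n > 0"
    by (cases n) auto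
  have "(b - a) / n < \<delta>"
    using n \<open>n > 0\<close> \<open>\<delta> > 0\<close> by (simp add: divide_less_eq mult.commute)
  define x where "x i = a + real i * (b - a) / n" for i :: nat
  have x0: "x 0 = a" and xn: "x n = b"
    using \<open>n > 0\<close> by (auto simp: x_def)
  have x_step: "x (Suc i) - x i = (b - a) / n" for i
    using \<open>n > 0\<close> by (simp add: x_def field_simps)
  have step: "\<bar>\<Phi> (x (Suc i)) - \<Phi> (x i)\<bar> \<le> \<epsilon> * (M (x (Suc i)) - M (x i))" if "i < n" for i
  proof (rule \<delta>)
    show "a \<le> x i"
      using \<open>a \<le> b\<close> by (simp add: x_def)
    show "x i \<le> x (Suc i)"
      using x_step[of i] \<open>a \<le> b\<close> divide_nonneg_nonneg[of "b - a" n] by linarith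
    have "real (Suc i) * (b - a) / n \<le> real n * (b - a) / n"
      using that \<open>a \<le> b\<close> by (intro divide_right_mono mult_right_mono) auto
    then show "x (Suc i) \<le> b"
      using \<open>n > 0\<close> by (simp add: x_def)
    show "x (Suc i) - x i < \<delta>"
      using x_step \<open>(b - a) / n < \<delta>\<close> by simp
  qed
  have "\<bar>\<Phi> b - \<Phi> a\<bar> = \<bar>\<Sum>i<n. \<Phi> (x (Suc i)) - \<Phi> (x i)\<bar>"
    using sum_lessThan_telescope[of "\<lambda>i. \<Phi> (x i)" n] by (simp add: x0 xn)
  also have "\<dots> \<le> (\<Sum>i<n. \<epsilon> * (M (x (Suc i)) - M (x i)))"
    using step by (intro order_trans[OF sum_abs] sum_mono) auto
  also have "\<dots> = \<epsilon> * (M b - M a)"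
    using sum_lessThan_telescope[of "\<lambda>i. M (x i)" n] by (simp add: sum_distrib_left[symmetric] x0 xn)
  finally show ?thesis .
qed

lemma eq_if_increments_dominated:
  fixes \<Phi> M :: "real \<Rightarrow> real"
  assumes "a \<le> b"
    and small: "\<And>\<epsilon>. \<epsilon> > 0 \<Longrightarrow> \<exists>\<delta>>0. \<forall>p q. a \<le> p \<longrightarrow> p \<le> q \<longrightarrow> q \<le> b \<longrightarrow> q - p < \<delta> \<longrightarrow>
                  \<bar>\<Phi> q - \<Phi> p\<bar> \<le> \<epsilon> * (M q - M p)"
  shows "\<Phi> b = \<Phi> a"
proof -
  have bound: "\<bar>\<Phi> b - \<Phi> a\<bar> \<le> \<epsilon> * (M b - M a)" if "\<epsilon> > 0" for \<epsilon>
    using small[OF that] abs_diff_le_if_increments_dominated[OF \<open>a \<le> b\<close>] by blast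
  have "\<bar>\<Phi> b - \<Phi> a\<bar> \<le> 0"
  proof (cases "M b - M a \<le> 0")
    case True
    then show ?thesis
      using bound[OF zero_less_one] by simp
  next
    case False
    show ?thesis
    proof (rule field_le_epsilon)
      fix e :: real assume "e > 0"
      then have "e / (M b - M a) > 0"
        using False by simp
      then show "\<bar>\<Phi> b - \<Phi> a\<bar> \<le> 0 + e"
        using bound[of "e / (M b - M a)"] False by simp
    qed
  qed
  then show ?thesis
    by simp
qed

lemma AC_derivI_increments:
  fixes F k m :: "real \<Rightarrow> real"
  assumes k: "k absolutely_integrable_on {a..b}" and m: "m integrable_on {a..b}"
    and small: "\<And>\<epsilon>. \<epsilon> > 0 \<Longrightarrow> \<exists>\<delta>>0. \<forall>p q. a \<le> p \<longrightarrow> p \<le> q \<longrightarrow> q \<le> b \<longrightarrow> q - p < \<delta> \<longrightarrow>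
                 \<bar>F q - F p - integral {p..q} k\<bar> \<le> \<epsilon> * integral {p..q} m"
  shows "AC_deriv F k a b"
  unfolding AC_deriv_def
proof (intro conjI ballI k)
  fix t assume t: "t \<in> {a..b}"
  have m_diff: "integral {a..q} m - integral {a..p} m = integral {p..q} m"
    if "a \<le> p" "p \<le> q" "q \<le> b" for p q
  proof -
    have "m integrable_on {a..q}"
      using that by (intro integrable_on_subinterval[OF m]) auto
    then have "integral {a..p} m + integral {p..q} m = integral {a..q} m"
      using that by (intro Henstock_Kurzweil_Integration.integral_combine) auto
    then show ?thesis
      by simp
  qed
  have "(\<lambda>s. F s - integral {a..s} k) t = (\<lambda>s. F s - integral {a..s} k) a"
  proof (rule eq_if_increments_dominated[where \<Phi> = "\<lambda>s. F s - integral {a..s} k" and M = "\<lambda>s. integral {a..s} m"])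
    fix \<epsilon> :: real assume "\<epsilon> > 0"
    then obtain \<delta> where "\<delta> > 0" and \<delta>: "\<forall>p q. a \<le> p \<longrightarrow> p \<le> q \<longrightarrow> q \<le> b \<longrightarrow> q - p < \<delta> \<longrightarrow>
        \<bar>F q - F p - integral {p..q} k\<bar> \<le> \<epsilon> * integral {p..q} m"
      using small by blast
    have "\<bar>(F q - integral {a..q} k) - (F p - integral {a..p} k)\<bar> \<le>
        \<epsilon> * (integral {a..q} m - integral {a..p} m)"
      if "a \<le> p" "p \<le> q" "q \<le> t" "q - p < \<delta>" for p q
    proof -
      have "q \<le> b"
        using that t by auto
      then have "\<bar>F q - F p - integral {p..q} k\<bar> \<le> \<epsilon> * integral {p..q} m"
        using \<delta> that(1,2,4) by blast
      moreover have "integral {a..q} k - integral {a..p} k = integral {p..q} k"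
        by (rule AC_deriv_diff[OF AC_deriv_integral[OF k] that(1,2) \<open>q \<le> b\<close>])
      ultimately show ?thesis
        using m_diff[OF that(1,2) \<open>q \<le> b\<close>] by (simp add: algebra_simps)
    qed
    with \<open>\<delta> > 0\<close> show "\<exists>\<delta>>0. \<forall>p q. a \<le> p \<longrightarrow> p \<le> q \<longrightarrow> q \<le> t \<longrightarrow> q - p < \<delta> \<longrightarrow>
        \<bar>(F q - integral {a..q} k) - (F p - integral {a..p} k)\<bar> \<le>
        \<epsilon> * (integral {a..q} m - integral {a..p} m)"
      by (intro exI[of _ \<delta>] conjI allI impI) auto
  qed (use t in auto)
  then show "F t = F a + integral {a..t} k"
    by simp
qed

lemma absolutely_integrable_inner_continuous:
  fixes g v :: "real \<Rightarrow> 'a::euclidean_space"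
  assumes g: "g absolutely_integrable_on {a..b}" and v: "continuous_on {a..b} v"
  shows "(\<lambda>t. g t \<bullet> v t) absolutely_integrable_on {a..b}"
proof -
  have bilinear: "bilinear ((\<bullet>) :: 'a \<Rightarrow> 'a \<Rightarrow> real)"
    by (simp add: bilinear_conv_bounded_bilinear bounded_bilinear_inner)
  have measurable: "v \<in> borel_measurable (lebesgue_on {a..b})"
    using v by (intro continuous_imp_measurable_on_sets_lebesgue) auto
  have bounded: "bounded (v ` {a..b})"
    using v by (intro compact_imp_bounded compact_continuous_image) auto
  have "(\<lambda>t. v t \<bullet> g t) absolutely_integrable_on {a..b}"
    by (rule absolutely_integrable_bounded_measurable_product[OF bilinear measurable _ bounded g]) auto
  then show ?thesis
    by (simp add: inner_commute)
qed

lemma norm_integral_inner_le: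
  fixes g c :: "real \<Rightarrow> 'a::euclidean_space"
  assumes g: "g absolutely_integrable_on {p..q}" and c: "continuous_on {p..q} c"
    and small: "\<And>t. t \<in> {p..q} \<Longrightarrow> norm (c t) \<le> \<epsilon>"
  shows "\<bar>integral {p..q} (\<lambda>t. g t \<bullet> c t)\<bar> \<le> \<epsilon> * integral {p..q} (\<lambda>t. norm (g t))"
proof -
  have "norm (integral {p..q} (\<lambda>t. g t \<bullet> c t)) \<le> integral {p..q} (\<lambda>t. \<epsilon> * norm (g t))"
  proof (rule integral_norm_bound_integral)
    show "(\<lambda>t. g t \<bullet> c t) integrable_on {p..q}"
      using absolutely_integrable_inner_continuous[OF g c] by (simp add: absolutely_integrable_on_def)
    show "(\<lambda>t. \<epsilon> * norm (g t)) integrable_on {p..q}"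
      using g by (intro integrable_on_mult_right) (simp add: absolutely_integrable_on_def)
    fix t assume "t \<in> {p..q}"
    have "norm (g t \<bullet> c t) \<le> norm (g t) * norm (c t)"
      using Cauchy_Schwarz_ineq2[of "g t" "c t"] by simp
    also have "\<dots> \<le> norm (g t) * \<epsilon>"
      using small[OF \<open>t \<in> {p..q}\<close>] by (intro mult_left_mono) auto
    finally show "norm (g t \<bullet> c t) \<le> \<epsilon> * norm (g t)"
      by (simp add: mult.commute)
  qed
  then show ?thesis
    by simp
qed

lemma uniformly_continuous_on_IccE:
  fixes u :: "real \<Rightarrow> 'a::real_normed_vector"
  assumes "continuous_on {a..b} u" "\<epsilon> > 0"
  obtains \<delta> where "\<delta> > 0"
    "\<And>s s'. s \<in> {a..b} \<Longrightarrow> s' \<in> {a..b} \<Longrightarrow> \<bar>s' - s\<bar> < \<delta> \<Longrightarrow> norm (u s' - u s) < \<epsilon>"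
  using compact_uniformly_continuous[OF assms(1) compact_Icc] assms(2)
  unfolding uniformly_continuous_on_def dist_norm real_norm_def by blast

lemma inner_increment_eq:
  fixes u v u' v' :: "real \<Rightarrow> 'a::euclidean_space"
  assumes u: "AC_deriv u u' p q" and v: "AC_deriv v v' p q" and "p \<le> q"
  shows "u q \<bullet> v q - u p \<bullet> v p - integral {p..q} (\<lambda>t. u' t \<bullet> v t + u t \<bullet> v' t) =
         integral {p..q} (\<lambda>t. u' t \<bullet> (v q - v t)) + integral {p..q} (\<lambda>t. v' t \<bullet> (u p - u t))"
proof -
  have u': "u' absolutely_integrable_on {p..q}" and v': "v' absolutely_integrable_on {p..q}"
    using u v by (simp_all add: AC_deriv_absolutely_integrable)
  have cu: "continuous_on {p..q} u" and cv: "continuous_on {p..q} v"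
    using u v by (simp_all add: AC_deriv_continuous)
  have integrable: "(\<lambda>t. g t \<bullet> w t) integrable_on {p..q}"
    if "g absolutely_integrable_on {p..q}" "continuous_on {p..q} w" for g w :: "real \<Rightarrow> 'a"
    using absolutely_integrable_inner_continuous[OF that] by (simp add: absolutely_integrable_on_def)
  have I1: "integral {p..q} (\<lambda>t. u' t \<bullet> (v q - v t)) = (u q - u p) \<bullet> v q - integral {p..q} (\<lambda>t. u' t \<bullet> v t)"
  proof -
    have "integral {p..q} (\<lambda>t. u' t \<bullet> (v q - v t)) =
        integral {p..q} (\<lambda>t. u' t \<bullet> v q) - integral {p..q} (\<lambda>t. u' t \<bullet> v t)"
      unfolding inner_diff_right by (intro integral_diff integrable u' cv continuous_on_const)
    also have "integral {p..q} (\<lambda>t. u' t \<bullet> v q) = (u q - u p) \<bullet> v q"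
      using AC_deriv_diff[OF u order_refl \<open>p \<le> q\<close> order_refl] AC_deriv_integrable[OF u]
      by simp
    finally show ?thesis .
  qed
  have I2: "integral {p..q} (\<lambda>t. v' t \<bullet> (u p - u t)) = (v q - v p) \<bullet> u p - integral {p..q} (\<lambda>t. v' t \<bullet> u t)"
  proof -
    have "integral {p..q} (\<lambda>t. v' t \<bullet> (u p - u t)) =
        integral {p..q} (\<lambda>t. v' t \<bullet> u p) - integral {p..q} (\<lambda>t. v' t \<bullet> u t)"
      unfolding inner_diff_right by (intro integral_diff integrable v' cu continuous_on_const)
    also have "integral {p..q} (\<lambda>t. v' t \<bullet> u p) = (v q - v p) \<bullet> u p"
      using AC_deriv_diff[OF v order_refl \<open>p \<le> q\<close> order_refl] AC_deriv_integrable[OF v]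
      by simp
    finally show ?thesis .
  qed
  have "integral {p..q} (\<lambda>t. u' t \<bullet> v t + u t \<bullet> v' t) =
      integral {p..q} (\<lambda>t. u' t \<bullet> v t + v' t \<bullet> u t)"
    by (simp add: inner_commute)
  also have "\<dots> = integral {p..q} (\<lambda>t. u' t \<bullet> v t) + integral {p..q} (\<lambda>t. v' t \<bullet> u t)"
    by (intro integral_add integrable u' v' cu cv)
  finally have "integral {p..q} (\<lambda>t. u' t \<bullet> v t + u t \<bullet> v' t) =
      integral {p..q} (\<lambda>t. u' t \<bullet> v t) + integral {p..q} (\<lambda>t. v' t \<bullet> u t)" .
  then show ?thesis
    unfolding I1 I2 by (simp add: algebra_simps inner_diff_left inner_commute)
qed

lemma AC_deriv_inner:
  fixes u v u' v' :: "real \<Rightarrow> 'a::euclidean_space"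
  assumes u: "AC_deriv u u' a b" and v: "AC_deriv v v' a b"
  shows "AC_deriv (\<lambda>t. u t \<bullet> v t) (\<lambda>t. u' t \<bullet> v t + u t \<bullet> v' t) a b"
proof (rule AC_derivI_increments[where m = "\<lambda>t. norm (u' t) + norm (v' t)"])
  have u': "u' absolutely_integrable_on {a..b}" and v': "v' absolutely_integrable_on {a..b}"
    using u v by (simp_all add: AC_deriv_absolutely_integrable)
  have cu: "continuous_on {a..b} u" and cv: "continuous_on {a..b} v"
    using u v by (simp_all add: AC_deriv_continuous)
  show "(\<lambda>t. u' t \<bullet> v t + u t \<bullet> v' t) absolutely_integrable_on {a..b}"
    using absolutely_integrable_inner_continuous[OF u' cv] absolutely_integrable_inner_continuous[OF v' cu]
    by (simp add: inner_commute)
  show "(\<lambda>t. norm (u' t) + norm (v' t)) integrable_on {a..b}"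
    using u' v' by (intro integrable_add) (simp_all add: absolutely_integrable_on_def)
  fix \<epsilon> :: real assume "\<epsilon> > 0"
  obtain \<delta>u where "\<delta>u > 0" and \<delta>u: "\<And>s s'. s \<in> {a..b} \<Longrightarrow> s' \<in> {a..b} \<Longrightarrow>
      \<bar>s' - s\<bar> < \<delta>u \<Longrightarrow> norm (u s' - u s) < \<epsilon>"
    using uniformly_continuous_on_IccE[OF cu \<open>\<epsilon> > 0\<close>] by blast
  obtain \<delta>v where "\<delta>v > 0" and \<delta>v: "\<And>s s'. s \<in> {a..b} \<Longrightarrow> s' \<in> {a..b} \<Longrightarrow>
      \<bar>s' - s\<bar> < \<delta>v \<Longrightarrow> norm (v s' - v s) < \<epsilon>"
    using uniformly_continuous_on_IccE[OF cv \<open>\<epsilon> > 0\<close>] by blast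
  have "\<bar>u q \<bullet> v q - u p \<bullet> v p - integral {p..q} (\<lambda>t. u' t \<bullet> v t + u t \<bullet> v' t)\<bar> \<le>
      \<epsilon> * integral {p..q} (\<lambda>t. norm (u' t) + norm (v' t))"
    if pq: "a \<le> p" "p \<le> q" "q \<le> b" "q - p < min \<delta>u \<delta>v" for p q
  proof -
    have sub: "{p..q} \<subseteq> {a..b}"
      using pq by auto
    have I1: "\<bar>integral {p..q} (\<lambda>t. u' t \<bullet> (v q - v t))\<bar> \<le> \<epsilon> * integral {p..q} (\<lambda>t. norm (u' t))"
    proof (rule norm_integral_inner_le)
      show "u' absolutely_integrable_on {p..q}"
        using absolutely_integrable_on_subinterval[OF u' sub] .
      show "continuous_on {p..q} (\<lambda>t. v q - v t)"
        using continuous_on_subset[OF cv sub] by (intro continuous_intros)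
      show "norm (v q - v t) \<le> \<epsilon>" if "t \<in> {p..q}" for t
        using \<delta>v[of t q] that pq by (auto simp: abs_of_nonneg)
    qed
    have I2: "\<bar>integral {p..q} (\<lambda>t. v' t \<bullet> (u p - u t))\<bar> \<le> \<epsilon> * integral {p..q} (\<lambda>t. norm (v' t))"
    proof (rule norm_integral_inner_le)
      show "v' absolutely_integrable_on {p..q}"
        using absolutely_integrable_on_subinterval[OF v' sub] .
      show "continuous_on {p..q} (\<lambda>t. u p - u t)"
        using continuous_on_subset[OF cu sub] by (intro continuous_intros)
      show "norm (u p - u t) \<le> \<epsilon>" if "t \<in> {p..q}" for t
        using \<delta>u[of t p] that pq by (auto simp: abs_of_nonpos)
    qed
    have m: "integral {p..q} (\<lambda>t. norm (u' t) + norm (v' t)) =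
        integral {p..q} (\<lambda>t. norm (u' t)) + integral {p..q} (\<lambda>t. norm (v' t))"
      using absolutely_integrable_on_subinterval[OF u' sub] absolutely_integrable_on_subinterval[OF v' sub]
      by (intro integral_add) (simp_all add: absolutely_integrable_on_def)
    have "AC_deriv u u' p q" "AC_deriv v v' p q"
      using pq by (auto intro: AC_deriv_subinterval[OF u] AC_deriv_subinterval[OF v])
    from inner_increment_eq[OF this \<open>p \<le> q\<close>] show ?thesis
      using I1 I2 unfolding m distrib_left by linarith
  qed
  then show "\<exists>\<delta>>0. \<forall>p q. a \<le> p \<longrightarrow> p \<le> q \<longrightarrow> q \<le> b \<longrightarrow> q - p < \<delta> \<longrightarrow>
      \<bar>u q \<bullet> v q - u p \<bullet> v p - integral {p..q} (\<lambda>t. u' t \<bullet> v t + u t \<bullet> v' t)\<bar> \<le>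
      \<epsilon> * integral {p..q} (\<lambda>t. norm (u' t) + norm (v' t))"
    using \<open>\<delta>u > 0\<close> \<open>\<delta>v > 0\<close> by (intro exI[of _ "min \<delta>u \<delta>v"]) auto
qed

lemma real_mvt_between:
  fixes \<phi> \<phi>' :: "real \<Rightarrow> real"
  assumes deriv: "\<And>x. (\<phi> has_real_derivative \<phi>' x) (at x)"
  obtains \<xi> where "min x y \<le> \<xi>" "\<xi> \<le> max x y" "\<phi> y - \<phi> x = \<phi>' \<xi> * (y - x)"
proof (cases x y rule: linorder_cases)
  case less
  then obtain \<xi> where "x < \<xi>" "\<xi> < y" "\<phi> y - \<phi> x = (y - x) * \<phi>' \<xi>"
    using MVT2[OF less deriv] by blast
  then show ?thesis
    using that[of \<xi>] by (simp add: mult.commute)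
next
  case equal
  then show ?thesis
    using that[of x] by simp
next
  case greater
  then obtain \<xi> where "y < \<xi>" "\<xi> < x" "\<phi> x - \<phi> y = (x - y) * \<phi>' \<xi>"
    using MVT2[OF greater deriv] by blast
  then show ?thesis
    using that[of \<xi>] by (simp add: algebra_simps)
qed

lemma compose_increment_eq:
  fixes \<phi> \<phi>' u u' :: "real \<Rightarrow> real"
  assumes u: "AC_deriv u u' p q" and "p \<le> q"
    and deriv: "\<And>x. (\<phi> has_real_derivative \<phi>' x) (at x)" and cont: "continuous_on UNIV \<phi>'"
  obtains \<xi> where "min (u p) (u q) \<le> \<xi>" "\<xi> \<le> max (u p) (u q)"
    "\<phi> (u q) - \<phi> (u p) - integral {p..q} (\<lambda>t. \<phi>' (u t) * u' t) =
     integral {p..q} (\<lambda>t. u' t \<bullet> (\<phi>' \<xi> - \<phi>' (u t)))"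
proof -
  obtain \<xi> where \<xi>: "min (u p) (u q) \<le> \<xi>" "\<xi> \<le> max (u p) (u q)"
    and mvt: "\<phi> (u q) - \<phi> (u p) = \<phi>' \<xi> * (u q - u p)"
    using real_mvt_between[OF deriv] by blast
  have u': "u' absolutely_integrable_on {p..q}"
    using u by (rule AC_deriv_absolutely_integrable)
  have "continuous_on {p..q} (\<lambda>t. \<phi>' (u t))"
    by (rule continuous_on_compose2[OF cont AC_deriv_continuous[OF u]]) auto
  then have "(\<lambda>t. u' t * \<phi>' (u t)) integrable_on {p..q}"
    using absolutely_integrable_inner_continuous[OF u'] by (simp add: absolutely_integrable_on_def)
  moreover have "(\<lambda>t. u' t * \<phi>' \<xi>) integrable_on {p..q}"
    using u' by (intro integrable_on_mult_left) (simp add: absolutely_integrable_on_def)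
  ultimately have "integral {p..q} (\<lambda>t. u' t \<bullet> (\<phi>' \<xi> - \<phi>' (u t))) =
      integral {p..q} (\<lambda>t. u' t * \<phi>' \<xi>) - integral {p..q} (\<lambda>t. u' t * \<phi>' (u t))"
    unfolding inner_real_def right_diff_distrib by (intro integral_diff)
  also have "\<dots> = \<phi> (u q) - \<phi> (u p) - integral {p..q} (\<lambda>t. \<phi>' (u t) * u' t)"
    using mvt AC_deriv_diff[OF u order_refl \<open>p \<le> q\<close> order_refl] by (simp add: mult.commute)
  finally show ?thesis
    using that[OF \<xi>] by simp
qed

lemma AC_deriv_compose:
  fixes \<phi> \<phi>' u u' :: "real \<Rightarrow> real"
  assumes u: "AC_deriv u u' a b"
    and deriv: "\<And>x. (\<phi> has_real_derivative \<phi>' x) (at x)" and cont: "continuous_on UNIV \<phi>'"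
  shows "AC_deriv (\<lambda>t. \<phi> (u t)) (\<lambda>t. \<phi>' (u t) * u' t) a b"
proof (rule AC_derivI_increments[where m = "\<lambda>t. \<bar>u' t\<bar>"])
  have u': "u' absolutely_integrable_on {a..b}" and cu: "continuous_on {a..b} u"
    using u by (simp_all add: AC_deriv_absolutely_integrable AC_deriv_continuous)
  have c\<phi>u: "continuous_on {a..b} (\<lambda>t. \<phi>' (u t))"
    by (rule continuous_on_compose2[OF cont cu]) auto
  show "(\<lambda>t. \<phi>' (u t) * u' t) absolutely_integrable_on {a..b}"
    using absolutely_integrable_inner_continuous[OF u' c\<phi>u] by (simp add: mult.commute)
  show "(\<lambda>t. \<bar>u' t\<bar>) integrable_on {a..b}"
    using u' by (simp add: absolutely_integrable_on_def)
  fix \<epsilon> :: real assume "\<epsilon> > 0"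
  obtain R where R: "\<And>t. t \<in> {a..b} \<Longrightarrow> \<bar>u t\<bar> \<le> R"
    using compact_imp_bounded[OF compact_continuous_image[OF cu compact_Icc]]
    unfolding bounded_iff by (metis imageI real_norm_def)
  obtain \<eta> where "\<eta> > 0" and \<eta>: "\<And>x x'. x \<in> {-R..R} \<Longrightarrow> x' \<in> {-R..R} \<Longrightarrow>
      \<bar>x' - x\<bar> < \<eta> \<Longrightarrow> norm (\<phi>' x' - \<phi>' x) < \<epsilon>"
    using uniformly_continuous_on_IccE[OF continuous_on_subset[OF cont subset_UNIV] \<open>\<epsilon> > 0\<close>] by blast
  obtain \<delta> where "\<delta> > 0" and \<delta>: "\<And>s s'. s \<in> {a..b} \<Longrightarrow> s' \<in> {a..b} \<Longrightarrow>
      \<bar>s' - s\<bar> < \<delta> \<Longrightarrow> norm (u s' - u s) < \<eta> / 2"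
    using uniformly_continuous_on_IccE[OF cu, of "\<eta> / 2"] \<open>\<eta> > 0\<close> by auto
  have "\<bar>\<phi> (u q) - \<phi> (u p) - integral {p..q} (\<lambda>t. \<phi>' (u t) * u' t)\<bar> \<le>
      \<epsilon> * integral {p..q} (\<lambda>t. \<bar>u' t\<bar>)"
    if pq: "a \<le> p" "p \<le> q" "q \<le> b" "q - p < \<delta>" for p q
  proof -
    have sub: "{p..q} \<subseteq> {a..b}"
      using pq by auto
    have "AC_deriv u u' p q"
      using pq by (intro AC_deriv_subinterval[OF u]) auto
    then obtain \<xi> where \<xi>: "min (u p) (u q) \<le> \<xi>" "\<xi> \<le> max (u p) (u q)"
      and eq: "\<phi> (u q) - \<phi> (u p) - integral {p..q} (\<lambda>t. \<phi>' (u t) * u' t) =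
        integral {p..q} (\<lambda>t. u' t \<bullet> (\<phi>' \<xi> - \<phi>' (u t)))"
      using compose_increment_eq[OF _ \<open>p \<le> q\<close> deriv cont] by blast
    have "\<bar>integral {p..q} (\<lambda>t. u' t \<bullet> (\<phi>' \<xi> - \<phi>' (u t)))\<bar> \<le> \<epsilon> * integral {p..q} (\<lambda>t. norm (u' t))"
    proof (rule norm_integral_inner_le)
      show "u' absolutely_integrable_on {p..q}"
        using absolutely_integrable_on_subinterval[OF u' sub] .
      show "continuous_on {p..q} (\<lambda>t. \<phi>' \<xi> - \<phi>' (u t))"
        using continuous_on_subset[OF c\<phi>u sub] by (intro continuous_intros)
      fix t assume t: "t \<in> {p..q}"
      have "\<bar>u q - u p\<bar> < \<eta> / 2" "\<bar>u t - u p\<bar> < \<eta> / 2"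
        using \<delta>[of p q] \<delta>[of p t] t pq by auto
      moreover have "\<bar>\<xi> - u p\<bar> \<le> \<bar>u q - u p\<bar>"
        using \<xi> by (auto simp: min_def max_def split: if_splits)
      ultimately have "\<bar>\<xi> - u t\<bar> < \<eta>"
        by arith
      moreover have "\<xi> \<in> {-R..R}" "u t \<in> {-R..R}"
        using \<xi> R[of p] R[of q] R[of t] t pq sub by auto
      ultimately show "norm (\<phi>' \<xi> - \<phi>' (u t)) \<le> \<epsilon>"
        using \<eta>[of "u t" \<xi>] by simp
    qed
    then show ?thesis
      using eq by simp
  qed
  then show "\<exists>\<delta>>0. \<forall>p q. a \<le> p \<longrightarrow> p \<le> q \<longrightarrow> q \<le> b \<longrightarrow> q - p < \<delta> \<longrightarrow>
      \<bar>\<phi> (u q) - \<phi> (u p) - integral {p..q} (\<lambda>t. \<phi>' (u t) * u' t)\<bar> \<le>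
      \<epsilon> * integral {p..q} (\<lambda>t. \<bar>u' t\<bar>)"
    using \<open>\<delta> > 0\<close> by (intro exI[of _ \<delta>]) auto
qed

section \<open>Gronwall's inequality and weighted integrals\<close>

lemma integral_le_AE:
  fixes f g :: "real \<Rightarrow> real"
  assumes f: "f integrable_on S" and g: "g integrable_on S"
    and le: "AE u in lborel. u \<in> S \<longrightarrow> f u \<le> g u"
  shows "integral S f \<le> integral S g"
proof -
  obtain N where N: "N \<in> null_sets lborel" "{u \<in> space lborel. \<not> (u \<in> S \<longrightarrow> f u \<le> g u)} \<subseteq> N"
    using le by (elim AE_E) (auto simp: null_sets_def)
  have "negligible N"
    using N(1) by (simp add: negligible_iff_null_sets null_sets_completionI)
  define f' where "f' u = (if u \<in> N then g u else f u)" for u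
  have "integral S f = integral S f'"
    by (rule integral_spike[OF \<open>negligible N\<close>]) (auto simp: f'_def)
  also have "\<dots> \<le> integral S g"
  proof (rule integral_le)
    show "f' integrable_on S"
      by (rule integrable_spike[OF f \<open>negligible N\<close>]) (auto simp: f'_def)
  qed (use g N(2) in \<open>auto simp: f'_def\<close>)
  finally show ?thesis .
qed

lemma gronwall_integrating_factor:
  fixes y y' \<alpha> \<beta> :: "real \<Rightarrow> real"
  assumes y: "AC_deriv y y' s t" and "s \<le> t"
    and \<alpha>: "\<alpha> absolutely_integrable_on {s..t}" and \<beta>: "\<beta> absolutely_integrable_on {s..t}"
    and ineq: "AE u in lborel. u \<in> {s..t} \<longrightarrow> y' u \<le> \<alpha> u * y u + \<beta> u"
  shows "exp (- integral {s..t} \<alpha>) * y t \<le> y s + integral {s..t} (\<lambda>u. exp (- integral {s..u} \<alpha>) * \<beta> u)"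
proof -
  define E where "E u = exp (- integral {s..u} \<alpha>)" for u
  have A: "AC_deriv (\<lambda>u. - integral {s..u} \<alpha>) (\<lambda>u. - \<alpha> u) s t"
    unfolding AC_deriv_def
  proof (intro conjI ballI)
    show "(\<lambda>u. - \<alpha> u) absolutely_integrable_on {s..t}"
      using \<alpha> by (simp add: absolutely_integrable_on_def integrable_neg)
    fix u assume "u \<in> {s..t}"
    have "\<alpha> integrable_on {s..t}"
      using \<alpha> by (simp add: absolutely_integrable_on_def)
    then have "\<alpha> integrable_on {s..u}"
      by (rule integrable_on_subinterval) (use \<open>u \<in> {s..t}\<close> in auto)
    then show "- integral {s..u} \<alpha> = - integral {s..s} \<alpha> + integral {s..u} (\<lambda>u. - \<alpha> u)"
      by (simp add: integral_neg)
  qed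
  have E: "AC_deriv E (\<lambda>u. E u * - \<alpha> u) s t"
    unfolding E_def by (rule AC_deriv_compose[OF A DERIV_exp]) (intro continuous_intros)
  have Ey: "AC_deriv (\<lambda>u. E u * y u) (\<lambda>u. E u * - \<alpha> u * y u + E u * y' u) s t"
    using AC_deriv_inner[OF E y] by simp
  have E\<beta>: "(\<lambda>u. E u * \<beta> u) integrable_on {s..t}"
    using absolutely_integrable_inner_continuous[OF \<beta> AC_deriv_continuous[OF E]]
    by (simp add: absolutely_integrable_on_def mult.commute)
  have "E t * y t - E s * y s = integral {s..t} (\<lambda>u. E u * - \<alpha> u * y u + E u * y' u)"
    by (rule AC_deriv_diff[OF Ey order_refl \<open>s \<le> t\<close> order_refl])
  also have "\<dots> \<le> integral {s..t} (\<lambda>u. E u * \<beta> u)"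
  proof (rule integral_le_AE[OF AC_deriv_integrable[OF Ey] E\<beta>])
    show "AE u in lborel. u \<in> {s..t} \<longrightarrow> E u * - \<alpha> u * y u + E u * y' u \<le> E u * \<beta> u"
      using ineq
    proof eventually_elim
      case (elim u)
      have "E u * y' u \<le> E u * (\<alpha> u * y u + \<beta> u)" if "u \<in> {s..t}"
        using elim that by (intro mult_left_mono) (auto simp: E_def)
      then show ?case
        by (simp add: algebra_simps)
    qed
  qed
  finally show ?thesis
    by (simp add: E_def)
qed

lemma gronwall_AC:
  fixes y y' \<alpha> \<beta> :: "real \<Rightarrow> real"
  assumes y: "AC_deriv y y' s t" and "s \<le> t"
    and \<alpha>: "\<alpha> absolutely_integrable_on {s..t}" and \<beta>: "\<beta> absolutely_integrable_on {s..t}"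
    and ineq: "AE u in lborel. u \<in> {s..t} \<longrightarrow> y' u \<le> \<alpha> u * y u + \<beta> u"
  shows "y t \<le> exp (integral {s..t} \<alpha>) * y s + integral {s..t} (\<lambda>u. exp (integral {u..t} \<alpha>) * \<beta> u)"
proof -
  define E where "E u = exp (- integral {s..u} \<alpha>)" for u
  have weight: "E u / E t = exp (integral {u..t} \<alpha>)" if "u \<in> {s..t}" for u
  proof -
    have "integral {s..t} \<alpha> - integral {s..u} \<alpha> = integral {u..t} \<alpha>"
      using that by (intro AC_deriv_diff[OF AC_deriv_integral[OF \<alpha>]]) auto
    then show ?thesis
      by (simp add: E_def exp_diff[symmetric])
  qed
  have "E t * y t \<le> y s + integral {s..t} (\<lambda>u. E u * \<beta> u)"
    unfolding E_def by (rule gronwall_integrating_factor[OF assms])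
  then have "y t \<le> (y s + integral {s..t} (\<lambda>u. E u * \<beta> u)) / E t"
    by (simp add: E_def pos_le_divide_eq mult.commute)
  also have "\<dots> = E s / E t * y s + integral {s..t} (\<lambda>u. E u / E t * \<beta> u)"
    by (simp add: E_def add_divide_distrib)
  also have "E s / E t = exp (integral {s..t} \<alpha>)"
    using weight[of s] \<open>s \<le> t\<close> by simp
  also have "integral {s..t} (\<lambda>u. E u / E t * \<beta> u) = integral {s..t} (\<lambda>u. exp (integral {u..t} \<alpha>) * \<beta> u)"
    by (rule integral_cong) (simp add: weight)
  finally show ?thesis .
qed

lemma exp_weight_integrable:
  fixes \<alpha> \<beta> :: "real \<Rightarrow> real"
  assumes \<alpha>: "\<alpha> absolutely_integrable_on {s..t}" and \<beta>: "\<beta> absolutely_integrable_on {s..t}"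
  shows "(\<lambda>u. exp (integral {u..t} \<alpha>) * \<beta> u) integrable_on {s..t}"
proof -
  have "continuous_on {s..t} (\<lambda>u. exp (integral {s..t} \<alpha> - integral {s..u} \<alpha>))"
    using \<alpha> by (intro continuous_intros indefinite_integral_continuous_1) (simp add: absolutely_integrable_on_def)
  then have "continuous_on {s..t} (\<lambda>u. exp (integral {u..t} \<alpha>))"
  proof (rule continuous_on_eq)
    fix u assume "u \<in> {s..t}"
    then have "integral {s..t} \<alpha> - integral {s..u} \<alpha> = integral {u..t} \<alpha>"
      by (intro AC_deriv_diff[OF AC_deriv_integral[OF \<alpha>]]) auto
    then show "exp (integral {s..t} \<alpha> - integral {s..u} \<alpha>) = exp (integral {u..t} \<alpha>)"
      by simp
  qed
  then have "(\<lambda>u. \<beta> u * exp (integral {u..t} \<alpha>)) integrable_on {s..t}"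
    using absolutely_integrable_inner_continuous[OF \<beta>] by (simp add: absolutely_integrable_on_def)
  then show ?thesis
    by (simp add: mult.commute)
qed

lemma integral_le_integral_abs:
  fixes \<alpha> :: "real \<Rightarrow> real"
  assumes \<alpha>: "\<alpha> absolutely_integrable_on {a..b}" and "a \<le> u" "v \<le> b"
  shows "integral {u..v} \<alpha> \<le> integral {a..b} (\<lambda>x. \<bar>\<alpha> x\<bar>)"
proof -
  have sub: "{u..v} \<subseteq> {a..b}"
    using assms by auto
  have int: "\<alpha> integrable_on {a..b}" and abs_int: "(\<lambda>x. \<bar>\<alpha> x\<bar>) integrable_on {a..b}"
    using \<alpha> by (simp_all add: absolutely_integrable_on_def)
  have "integral {u..v} \<alpha> \<le> integral {u..v} (\<lambda>x. \<bar>\<alpha> x\<bar>)"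
    by (intro integral_le integrable_on_subinterval[OF int sub] integrable_on_subinterval[OF abs_int sub]) auto
  also have "\<dots> \<le> integral {a..b} (\<lambda>x. \<bar>\<alpha> x\<bar>)"
    by (intro integral_subset_le sub integrable_on_subinterval[OF abs_int sub] abs_int) auto
  finally show ?thesis .
qed

lemma integral_decaying_weight_le_geometric_sum:
  fixes w \<beta> :: "real \<Rightarrow> real"
  assumes "\<gamma> > 0" "K \<ge> 0" "B \<ge> 0"
    and nonneg: "\<And>u. 0 \<le> \<beta> u" and \<beta>: "\<And>p q. \<beta> integrable_on {p..q}"
    and B: "\<And>p q. p \<le> q \<Longrightarrow> q \<le> p + 1 \<Longrightarrow> integral {p..q} \<beta> \<le> B"
    and w: "\<And>u. u \<in> {s..t} \<Longrightarrow> w u \<le> K * exp (- \<gamma> * (t - u))"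
    and w\<beta>: "(\<lambda>u. w u * \<beta> u) integrable_on {s..t}"
    and "s \<le> t" "t - real n \<le> s"
  shows "integral {s..t} (\<lambda>u. w u * \<beta> u) \<le> K * B * (\<Sum>k<n. exp (- \<gamma>) ^ k)"
  using w w\<beta> \<open>s \<le> t\<close> \<open>t - real n \<le> s\<close>
proof (induction n arbitrary: s)
  case 0
  then show ?case
    by simp
next
  case (Suc n)
  have "0 \<le> K * B * exp (- \<gamma>) ^ n"
    using \<open>K \<ge> 0\<close> \<open>B \<ge> 0\<close> by simp
  show ?case
  proof (cases "t - real n \<le> s")
    case True
    then show ?thesis
      using Suc.IH[of s] Suc.prems \<open>0 \<le> K * B * exp (- \<gamma>) ^ n\<close>
      unfolding sum.lessThan_Suc distrib_left by fastforce
  next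
    case False
    define c where "c = t - real n"
    have c: "s \<le> c" "c \<le> t" "c \<le> s + 1"
      using False Suc.prems by (auto simp: c_def)
    have "w u * \<beta> u \<le> K * exp (- \<gamma>) ^ n * \<beta> u" if u: "u \<in> {s..c}" for u
    proof -
      have "w u \<le> K * exp (- \<gamma> * (t - u))"
        using Suc.prems(1) u c by auto
      also have "\<dots> \<le> K * exp (- \<gamma> * real n)"
        using u \<open>\<gamma> > 0\<close> \<open>K \<ge> 0\<close> by (auto simp: c_def intro!: mult_left_mono)
      also have "exp (- \<gamma> * real n) = exp (- \<gamma>) ^ n"
        by (simp add: exp_of_nat_mult[symmetric] mult.commute)
      finally show ?thesis
        using nonneg by (intro mult_right_mono) auto
    qed
    then have "integral {s..c} (\<lambda>u. w u * \<beta> u) \<le> integral {s..c} (\<lambda>u. K * exp (- \<gamma>) ^ n * \<beta> u)"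
      using Suc.prems c
      by (intro integral_le integrable_on_subinterval[OF Suc.prems(2)] integrable_on_mult_right \<beta>) auto
    also have "\<dots> = K * exp (- \<gamma>) ^ n * integral {s..c} \<beta>"
      by simp
    also have "\<dots> \<le> K * exp (- \<gamma>) ^ n * B"
      using B[OF c(1,3)] \<open>K \<ge> 0\<close> by (intro mult_left_mono) auto
    also have "\<dots> = K * B * exp (- \<gamma>) ^ n"
      by simp
    finally have head: "integral {s..c} (\<lambda>u. w u * \<beta> u) \<le> K * B * exp (- \<gamma>) ^ n" .
    have tail: "integral {c..t} (\<lambda>u. w u * \<beta> u) \<le> K * B * (\<Sum>k<n. exp (- \<gamma>) ^ k)"
      using c Suc.prems
      by (intro Suc.IH integrable_on_subinterval[OF Suc.prems(2)]) (auto simp: c_def)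
    have "integral {s..c} (\<lambda>u. w u * \<beta> u) + integral {c..t} (\<lambda>u. w u * \<beta> u) =
        integral {s..t} (\<lambda>u. w u * \<beta> u)"
      using c by (intro Henstock_Kurzweil_Integration.integral_combine Suc.prems(2)) auto
    then show ?thesis
      using head tail unfolding sum.lessThan_Suc distrib_left by linarith
  qed
qed

lemma integral_decaying_weight_le:
  fixes w \<beta> :: "real \<Rightarrow> real"
  assumes "\<gamma> > 0" "K \<ge> 0"
    and nonneg: "\<And>u. 0 \<le> \<beta> u" and \<beta>: "\<And>p q. \<beta> integrable_on {p..q}"
    and B: "\<And>p q. p \<le> q \<Longrightarrow> q \<le> p + 1 \<Longrightarrow> integral {p..q} \<beta> \<le> B"
    and w: "\<And>u. u \<in> {s..t} \<Longrightarrow> w u \<le> K * exp (- \<gamma> * (t - u))"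
    and w\<beta>: "(\<lambda>u. w u * \<beta> u) integrable_on {s..t}"
    and "s \<le> t"
  shows "integral {s..t} (\<lambda>u. w u * \<beta> u) \<le> K * B / (1 - exp (- \<gamma>))"
proof -
  have "B \<ge> 0"
    using B[of 0 0] by simp
  have "t - real (nat \<lceil>t - s\<rceil>) \<le> s"
    by linarith
  with assms \<open>B \<ge> 0\<close> have "integral {s..t} (\<lambda>u. w u * \<beta> u) \<le>
      K * B * (\<Sum>k<nat \<lceil>t - s\<rceil>. exp (- \<gamma>) ^ k)"
    by (intro integral_decaying_weight_le_geometric_sum)
  also have "\<dots> \<le> K * B * (1 / (1 - exp (- \<gamma>)))"
    using \<open>\<gamma> > 0\<close> \<open>K \<ge> 0\<close> \<open>B \<ge> 0\<close>
    by (intro mult_left_mono) (auto simp: sum_gp_strict divide_right_mono)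
  finally show ?thesis
    by simp
qed

section \<open>Consequences of the hypotheses\<close>

lemma continuous_on_if_lipschitz_on_cballs:
  fixes g :: "'a::euclidean_space \<Rightarrow> 'b::real_normed_vector"
  assumes lip: "\<And>n::nat. \<exists>L. \<forall>x\<in>cball 0 (real n). \<forall>y\<in>cball 0 (real n). norm (g x - g y) \<le> L * norm (x - y)"
  shows "continuous_on UNIV g"
proof (intro continuous_at_imp_continuous_on ballI)
  fix z :: 'a
  obtain n :: nat where n: "norm z + 1 < n"
    using reals_Archimedean2 by blast
  obtain L where L: "\<forall>x\<in>cball 0 (real n). \<forall>y\<in>cball 0 (real n). norm (g x - g y) \<le> L * norm (x - y)"
    using lip by blast
  have "(max L 0)-lipschitz_on (cball 0 (real n)) g"
  proof (rule lipschitz_onI)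
    fix x y assume "x \<in> cball (0::'a) (real n)" "y \<in> cball (0::'a) (real n)"
    then have "norm (g x - g y) \<le> L * norm (x - y)"
      using L by blast
    also have "\<dots> \<le> max L 0 * norm (x - y)"
      by (intro mult_right_mono) auto
    finally show "dist (g x) (g y) \<le> max L 0 * dist x y"
      by (simp add: dist_norm)
  qed simp
  then have "continuous_on (cball 0 (real n)) g"
    by (rule lipschitz_on_continuous_on)
  moreover have "z \<in> interior (cball 0 (real n))"
    using n by simp
  ultimately show "isCont g z"
    using continuous_on_interior by blast
qed

lemma LC_AE_continuous:
  fixes f :: "real \<Rightarrow> 'a::euclidean_space \<Rightarrow> 'a"
  assumes "LC f"
  shows "AE t in lborel. continuous_on UNIV (f t)"
proof -
  have "AE t in lborel. \<forall>n::nat. \<exists>L. \<forall>x\<in>cball 0 (real n). \<forall>y\<in>cball 0 (real n).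
      norm (f t x - f t y) \<le> L * norm (x - y)"
    unfolding AE_all_countable
  proof
    fix n :: nat
    obtain m l where "AE t in lborel. \<forall>x\<in>cball 0 (real n). \<forall>y\<in>cball 0 (real n).
        norm (f t x) \<le> m t \<and> norm (f t x - f t y) \<le> l t * norm (x - y)"
      using assms compact_cball unfolding LC_def by blast
    then show "AE t in lborel. \<exists>L. \<forall>x\<in>cball 0 (real n). \<forall>y\<in>cball 0 (real n).
        norm (f t x - f t y) \<le> L * norm (x - y)"
      by (rule eventually_mono) blast
  qed
  then show ?thesis
    by (rule eventually_mono) (intro continuous_on_if_lipschitz_on_cballs, blast)
qed

lemma AE_all_if_AE_pair_closed:
  fixes P :: "real \<Rightarrow> 'a::euclidean_space \<Rightarrow> bool"
  assumes pair: "AE p in (lborel :: (real \<times> 'a) measure). P (fst p) (snd p)"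
    and closed: "AE t in lborel. closed {z. P t z}"
  shows "AE t in lborel. \<forall>z. P t z"
proof -
  have "AE p in lborel \<Otimes>\<^sub>M lborel. P (fst p) (snd p)"
    unfolding lborel_prod by (rule pair)
  then have "AE t in lborel. AE z in lborel. P t z"
    using lborel_pair.AE_pair by fastforce
  with closed show ?thesis
  proof eventually_elim
    case (elim t)
    then obtain N where N: "N \<in> null_sets lborel" "{z \<in> space lborel. \<not> P t z} \<subseteq> N"
      by (elim AE_E) (auto simp: null_sets_def)
    have "negligible N"
      using N(1) by (simp add: negligible_iff_null_sets null_sets_completionI)
    then have "negligible {z. \<not> P t z}"
      by (rule negligible_subset) (use N(2) in auto)
    moreover have "open {z. \<not> P t z}"
      using elim(1) by (simp add: closed_def Collect_neg_eq)
    ultimately have "{z. \<not> P t z} = {}"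
      using open_not_negligible by blast
    then show ?case
      by blast
  qed
qed

lemma H1_AE_all:
  fixes f :: "real \<Rightarrow> 'a::euclidean_space \<Rightarrow> 'a"
  assumes "LC f" and "H1 f \<alpha> \<beta>"
  shows "AE t in lborel. \<forall>z. 2 * (f t z \<bullet> z) \<le> \<alpha> t * (norm z)\<^sup>2 + \<beta> t"
proof (rule AE_all_if_AE_pair_closed)
  show "AE p in lborel. 2 * (f (fst p) (snd p) \<bullet> snd p) \<le> \<alpha> (fst p) * (norm (snd p))\<^sup>2 + \<beta> (fst p)"
    using assms(2) unfolding H1_def by blast
  show "AE t in lborel. closed {z. 2 * (f t z \<bullet> z) \<le> \<alpha> t * (norm z)\<^sup>2 + \<beta> t}"
    using LC_AE_continuous[OF assms(1)]
    by eventually_elim (intro closed_Collect_le continuous_intros)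
qed

lemma H3_unit_interval_bound:
  fixes \<beta> :: "real \<Rightarrow> real"
  assumes "H3 \<beta>" and \<beta>: "L1_loc \<beta>" and nonneg: "\<And>t. 0 \<le> \<beta> t"
  obtains B where "B \<ge> 0" "\<And>p q. p \<le> q \<Longrightarrow> q \<le> p + 1 \<Longrightarrow> integral {p..q} \<beta> \<le> B"
proof -
  have "bdd_above (range (\<lambda>t. integral {-1..1} (\<lambda>s. \<beta> (s + t))))"
    using \<open>H3 \<beta>\<close> unfolding H3_def by (simp del: One_nat_def)
  then obtain B where B: "\<And>t. integral {-1..1} (\<lambda>s. \<beta> (s + t)) \<le> B"
    unfolding bdd_above_def by blast
  have shift: "integral {-1..1} (\<lambda>s. \<beta> (s + t)) = integral {t - 1..t + 1} \<beta>" for t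
    using integral_shift_Icc_real[of "-1" 1 \<beta> t] by (simp add: o_def add.commute)
  have le: "integral {p..q} \<beta> \<le> B" if "p \<le> q" "q \<le> p + 1" for p q
  proof -
    have "integral {p..q} \<beta> \<le> integral {p - 1..p + 1} \<beta>"
      using that \<beta> nonneg unfolding L1_loc_def absolutely_integrable_on_def
      by (intro integral_subset_le) auto
    also have "\<dots> \<le> B"
      using B[of p] shift[of p] by simp
    finally show ?thesis .
  qed
  moreover have "B \<ge> 0"
    using le[of 0 0] by simp
  ultimately show ?thesis
    using that by blast
qed

section \<open>Estimates along solutions\<close>

lemma is_solution_AC_deriv:
  assumes sol: "is_solution f r x0 x" and "r \<le> s"
  shows "AC_deriv x (\<lambda>u. f u (x u)) s t"
proof -
  have int: "(\<lambda>u. f u (x u)) absolutely_integrable_on {r..w}"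
    and eq: "((\<lambda>u. f u (x u)) has_integral (x w - x0)) {r..w}" if "r \<le> w" for w
    using sol that unfolding is_solution_def by blast+
  have "x r = x0"
    using sol unfolding is_solution_def by blast
  have "AC_deriv x (\<lambda>u. f u (x u)) r (max s t)"
    unfolding AC_deriv_def
  proof
    show "(\<lambda>u. f u (x u)) absolutely_integrable_on {r..max s t}"
      using int \<open>r \<le> s\<close> by simp
    show "\<forall>w\<in>{r..max s t}. x w = x r + integral {r..w} (\<lambda>u. f u (x u))"
    proof
      fix w assume "w \<in> {r..max s t}"
      then have "integral {r..w} (\<lambda>u. f u (x u)) = x w - x0"
        using eq by (simp add: integral_unique)
      then show "x w = x r + integral {r..w} (\<lambda>u. f u (x u))"
        using \<open>x r = x0\<close> by simp
    qed
  qed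
  then show ?thesis
    using \<open>r \<le> s\<close> by (rule AC_deriv_subinterval) simp
qed

lemma solution_norm_sq_le:
  fixes f :: "real \<Rightarrow> 'a::euclidean_space \<Rightarrow> 'a"
  assumes sol: "is_solution f r x0 x"
    and H1: "AE t in lborel. \<forall>z. 2 * (f t z \<bullet> z) \<le> \<alpha> t * (norm z)\<^sup>2 + \<beta> t"
    and \<alpha>: "L1_loc \<alpha>" and \<beta>: "L1_loc \<beta>" and "r \<le> s" "s \<le> t"
  shows "(norm (x t))\<^sup>2 \<le> exp (integral {s..t} \<alpha>) * (norm (x s))\<^sup>2
           + integral {s..t} (\<lambda>u. exp (integral {u..t} \<alpha>) * \<beta> u)"
proof -
  have x: "AC_deriv x (\<lambda>u. f u (x u)) s t"
    using sol \<open>r \<le> s\<close> by (rule is_solution_AC_deriv)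
  have "x t \<bullet> x t \<le> exp (integral {s..t} \<alpha>) * (x s \<bullet> x s)
           + integral {s..t} (\<lambda>u. exp (integral {u..t} \<alpha>) * \<beta> u)"
  proof (rule gronwall_AC[OF AC_deriv_inner[OF x x] \<open>s \<le> t\<close>])
    show "\<alpha> absolutely_integrable_on {s..t}" "\<beta> absolutely_integrable_on {s..t}"
      using \<alpha> \<beta> unfolding L1_loc_def by blast+
    show "AE u in lborel. u \<in> {s..t} \<longrightarrow>
        f u (x u) \<bullet> x u + x u \<bullet> f u (x u) \<le> \<alpha> u * (x u \<bullet> x u) + \<beta> u"
      using H1
    proof eventually_elim
      case (elim u)
      then have "2 * (f u (x u) \<bullet> x u) \<le> \<alpha> u * (x u \<bullet> x u) + \<beta> u"
        by (simp add: power2_norm_eq_inner)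
      then show ?case
        by (simp add: inner_commute[of "x u" "f u (x u)"])
    qed
  qed
  then show ?thesis
    by (simp add: power2_norm_eq_inner)
qed

lemma solution_norm_sq_le_window:
  fixes f :: "real \<Rightarrow> 'a::euclidean_space \<Rightarrow> 'a"
  assumes sol: "is_solution f r x0 x"
    and H1: "AE t in lborel. \<forall>z. 2 * (f t z \<bullet> z) \<le> \<alpha> t * (norm z)\<^sup>2 + \<beta> t"
    and \<alpha>: "L1_loc \<alpha>" and \<beta>: "L1_loc \<beta>" and nonneg: "\<And>t. 0 \<le> \<beta> t"
    and "a \<le> r" "r \<le> t" "t \<le> b"
  shows "(norm (x t))\<^sup>2 \<le> exp (integral {a..b} (\<lambda>u. \<bar>\<alpha> u\<bar>)) * ((norm x0)\<^sup>2 + integral {a..b} \<beta>)"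
proof -
  define M where "M = exp (integral {a..b} (\<lambda>u. \<bar>\<alpha> u\<bar>))"
  have \<alpha>_abs: "\<alpha> absolutely_integrable_on {p..q}" and \<beta>_abs: "\<beta> absolutely_integrable_on {p..q}" for p q
    using \<alpha> \<beta> unfolding L1_loc_def by blast+
  have \<beta>_int: "\<beta> integrable_on {p..q}" for p q
    using \<beta>_abs by (simp add: absolutely_integrable_on_def)
  have weight: "exp (integral {u..t} \<alpha>) \<le> M" if "a \<le> u" for u
    using integral_le_integral_abs[OF \<alpha>_abs that \<open>t \<le> b\<close>] by (simp add: M_def)
  have "x r = x0"
    using sol unfolding is_solution_def by blast
  have "integral {r..t} (\<lambda>u. exp (integral {u..t} \<alpha>) * \<beta> u) \<le> integral {r..t} (\<lambda>u. M * \<beta> u)"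
    using weight nonneg \<open>a \<le> r\<close>
    by (intro integral_le exp_weight_integrable \<alpha>_abs \<beta>_abs integrable_on_mult_right \<beta>_int)
      (auto intro: mult_right_mono)
  also have "\<dots> \<le> M * integral {a..b} \<beta>"
    using assms nonneg by (auto simp: M_def intro!: mult_left_mono integral_subset_le \<beta>_int)
  finally have "integral {r..t} (\<lambda>u. exp (integral {u..t} \<alpha>) * \<beta> u) \<le> M * integral {a..b} \<beta>" .
  moreover have "exp (integral {r..t} \<alpha>) * (norm x0)\<^sup>2 \<le> M * (norm x0)\<^sup>2"
    using weight \<open>a \<le> r\<close> by (intro mult_right_mono) auto
  moreover have "(norm (x t))\<^sup>2 \<le> exp (integral {r..t} \<alpha>) * (norm x0)\<^sup>2
      + integral {r..t} (\<lambda>u. exp (integral {u..t} \<alpha>) * \<beta> u)"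
    using solution_norm_sq_le[OF sol H1 \<alpha> \<beta> order_refl \<open>r \<le> t\<close>] \<open>x r = x0\<close> by simp
  ultimately show ?thesis
    unfolding M_def[symmetric] distrib_left by linarith
qed

lemma solution_norm_sq_decay:
  fixes f :: "real \<Rightarrow> 'a::euclidean_space \<Rightarrow> 'a"
  assumes sol: "is_solution f r x0 x"
    and H1: "AE t in lborel. \<forall>z. 2 * (f t z \<bullet> z) \<le> \<alpha> t * (norm z)\<^sup>2 + \<beta> t"
    and \<alpha>: "L1_loc \<alpha>" and \<beta>: "L1_loc \<beta>" and nonneg: "\<And>t. 0 \<le> \<beta> t"
    and "\<gamma> > 0"
    and decay: "\<And>s t. 0 \<le> s \<Longrightarrow> s \<le> t \<Longrightarrow> exp (integral {s..t} \<alpha>) \<le> K * exp (- \<gamma> * (t - s))"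
    and B: "\<And>p q. p \<le> q \<Longrightarrow> q \<le> p + 1 \<Longrightarrow> integral {p..q} \<beta> \<le> B"
    and "r \<le> s" "0 \<le> s" "s \<le> t"
  shows "(norm (x t))\<^sup>2 \<le> K * exp (- \<gamma> * (t - s)) * (norm (x s))\<^sup>2 + K * B / (1 - exp (- \<gamma>))"
proof -
  have \<alpha>_abs: "\<alpha> absolutely_integrable_on {p..q}" and \<beta>_abs: "\<beta> absolutely_integrable_on {p..q}" for p q
    using \<alpha> \<beta> unfolding L1_loc_def by blast+
  have "K \<ge> 0"
    using decay[of t t] \<open>0 \<le> s\<close> \<open>s \<le> t\<close> by simp
  have "exp (integral {s..t} \<alpha>) * (norm (x s))\<^sup>2 \<le> K * exp (- \<gamma> * (t - s)) * (norm (x s))\<^sup>2"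
    using decay \<open>0 \<le> s\<close> \<open>s \<le> t\<close> by (intro mult_right_mono) auto
  moreover have "integral {s..t} (\<lambda>u. exp (integral {u..t} \<alpha>) * \<beta> u) \<le> K * B / (1 - exp (- \<gamma>))"
  proof (rule integral_decaying_weight_le)
    show "exp (integral {u..t} \<alpha>) \<le> K * exp (- \<gamma> * (t - u))" if "u \<in> {s..t}" for u
      using decay that \<open>0 \<le> s\<close> by auto
    show "\<beta> integrable_on {p..q}" for p q
      using \<beta>_abs by (simp add: absolutely_integrable_on_def)
    show "(\<lambda>u. exp (integral {u..t} \<alpha>) * \<beta> u) integrable_on {s..t}"
      by (intro exp_weight_integrable \<alpha>_abs \<beta>_abs)
  qed (use \<open>\<gamma> > 0\<close> \<open>K \<ge> 0\<close> \<open>s \<le> t\<close> nonneg B in auto)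
  ultimately show ?thesis
    using solution_norm_sq_le[OF sol H1 \<alpha> \<beta> \<open>r \<le> s\<close> \<open>s \<le> t\<close>] by linarith
qed

lemma solution_norm_sq_at_max_zero:
  fixes f :: "real \<Rightarrow> 'a::euclidean_space \<Rightarrow> 'a"
  assumes sol: "is_solution f r x0 x"
    and H1: "AE t in lborel. \<forall>z. 2 * (f t z \<bullet> z) \<le> \<alpha> t * (norm z)\<^sup>2 + \<beta> t"
    and \<alpha>: "L1_loc \<alpha>" and \<beta>: "L1_loc \<beta>" and nonneg: "\<And>t. 0 \<le> \<beta> t"
    and "\<tau> \<le> r"
  shows "(norm (x (max r 0)))\<^sup>2 \<le>
    exp (integral {min \<tau> 0..0} (\<lambda>u. \<bar>\<alpha> u\<bar>)) * ((norm x0)\<^sup>2 + integral {min \<tau> 0..0} \<beta>)"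
proof (cases "0 \<le> r")
  case True
  define I where "I = integral {min \<tau> 0..0} (\<lambda>u. \<bar>\<alpha> u\<bar>)"
  define J where "J = integral {min \<tau> 0..0} \<beta>"
  have "0 \<le> I" "0 \<le> J"
    using \<alpha> \<beta> nonneg unfolding I_def J_def L1_loc_def absolutely_integrable_on_def
    by (auto intro: integral_nonneg)
  have "x (max r 0) = x0"
    using sol True unfolding is_solution_def by (simp add: max_def)
  then have "(norm (x (max r 0)))\<^sup>2 \<le> 1 * ((norm x0)\<^sup>2 + J)"
    using \<open>0 \<le> J\<close> by simp
  also have "\<dots> \<le> exp I * ((norm x0)\<^sup>2 + J)"
    using \<open>0 \<le> I\<close> \<open>0 \<le> J\<close> by (intro mult_right_mono) auto
  finally show ?thesis
    unfolding I_def J_def .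
next
  case False
  then show ?thesis
    using solution_norm_sq_le_window[OF sol H1 \<alpha> \<beta> nonneg, of "min \<tau> 0" 0 0] \<open>\<tau> \<le> r\<close> by simp
qed

lemma solution_norm_sq_uniform_decay:
  fixes f :: "real \<Rightarrow> 'a::euclidean_space \<Rightarrow> 'a"
  assumes sol: "is_solution f r x0 x"
    and H1: "AE t in lborel. \<forall>z. 2 * (f t z \<bullet> z) \<le> \<alpha> t * (norm z)\<^sup>2 + \<beta> t"
    and \<alpha>: "L1_loc \<alpha>" and \<beta>: "L1_loc \<beta>" and nonneg: "\<And>t. 0 \<le> \<beta> t"
    and "\<gamma> > 0" "K \<ge> 0"
    and decay: "\<And>s t. 0 \<le> s \<Longrightarrow> s \<le> t \<Longrightarrow> exp (integral {s..t} \<alpha>) \<le> K * exp (- \<gamma> * (t - s))"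
    and B: "\<And>p q. p \<le> q \<Longrightarrow> q \<le> p + 1 \<Longrightarrow> integral {p..q} \<beta> \<le> B"
    and "\<tau> \<le> r" "\<bar>\<tau>\<bar> \<le> t"
  shows "(norm (x (t + r)))\<^sup>2 \<le>
    K * exp (\<gamma> * \<bar>\<tau>\<bar>) * exp (integral {min \<tau> 0..0} (\<lambda>u. \<bar>\<alpha> u\<bar>)) * (1 + integral {min \<tau> 0..0} \<beta>)
      * ((norm x0)\<^sup>2 + 1) * exp (- \<gamma> * t) + K * B / (1 - exp (- \<gamma>))"
proof -
  define M where "M = exp (integral {min \<tau> 0..0} (\<lambda>u. \<bar>\<alpha> u\<bar>))"
  define J where "J = integral {min \<tau> 0..0} \<beta>"
  have "0 \<le> J"
    using \<beta> nonneg unfolding J_def L1_loc_def absolutely_integrable_on_def by (auto intro: integral_nonneg)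
  define s0 where "s0 = max r 0"
  have "r \<le> s0" "0 \<le> s0" "s0 \<le> t + r" "s0 - r \<le> \<bar>\<tau>\<bar>"
    using \<open>\<tau> \<le> r\<close> \<open>\<bar>\<tau>\<bar> \<le> t\<close> by (auto simp: s0_def)
  have "(norm (x s0))\<^sup>2 \<le> M * ((norm x0)\<^sup>2 + J)"
    unfolding s0_def M_def J_def
    by (rule solution_norm_sq_at_max_zero[OF sol H1 \<alpha> \<beta> nonneg \<open>\<tau> \<le> r\<close>])
  also have "\<dots> \<le> M * ((1 + J) * ((norm x0)\<^sup>2 + 1))"
    using \<open>0 \<le> J\<close> by (intro mult_left_mono) (auto simp: M_def algebra_simps)
  finally have start: "(norm (x s0))\<^sup>2 \<le> M * (1 + J) * ((norm x0)\<^sup>2 + 1)"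
    by (simp add: mult.assoc)
  have "\<gamma> * (s0 - r) \<le> \<gamma> * \<bar>\<tau>\<bar>"
    using \<open>s0 - r \<le> \<bar>\<tau>\<bar>\<close> \<open>\<gamma> > 0\<close> by (intro mult_left_mono) auto
  then have "- \<gamma> * (t + r - s0) \<le> \<gamma> * \<bar>\<tau>\<bar> + - \<gamma> * t"
    by (simp add: algebra_simps)
  then have "exp (- \<gamma> * (t + r - s0)) \<le> exp (\<gamma> * \<bar>\<tau>\<bar>) * exp (- \<gamma> * t)"
    by (simp add: exp_add[symmetric])
  then have "K * exp (- \<gamma> * (t + r - s0)) * (norm (x s0))\<^sup>2 \<le>
      K * (exp (\<gamma> * \<bar>\<tau>\<bar>) * exp (- \<gamma> * t)) * (M * (1 + J) * ((norm x0)\<^sup>2 + 1))"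
    using start \<open>K \<ge> 0\<close> by (intro mult_mono) auto
  moreover have "(norm (x (t + r)))\<^sup>2 \<le> K * exp (- \<gamma> * (t + r - s0)) * (norm (x s0))\<^sup>2
      + K * B / (1 - exp (- \<gamma>))"
    by (rule solution_norm_sq_decay[OF sol H1 \<alpha> \<beta> nonneg \<open>\<gamma> > 0\<close> decay B])
      (use \<open>r \<le> s0\<close> \<open>0 \<le> s0\<close> \<open>s0 \<le> t + r\<close> in auto)
  ultimately show ?thesis
    unfolding M_def J_def by (simp add: mult_ac)
qed

lemma solution_exponential_estimate:
  fixes f :: "real \<Rightarrow> 'a::euclidean_space \<Rightarrow> 'a" and \<alpha> \<beta> :: "real \<Rightarrow> real"
  assumes "LC f" and "H1 f \<alpha> \<beta>" and "H3 \<beta>" and "H2star \<alpha>"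
  obtains \<gamma> \<Gamma> C where "\<gamma> > 0" "\<Gamma> \<ge> 0" "C \<ge> 0"
    "\<And>r x0 x t. \<tau> \<le> r \<Longrightarrow> \<bar>\<tau>\<bar> \<le> t \<Longrightarrow> is_solution f r x0 x \<Longrightarrow>
       (norm (x (t + r)))\<^sup>2 \<le> \<Gamma> * ((norm x0)\<^sup>2 + 1) * exp (- \<gamma> * t) + C"
proof -
  have \<alpha>: "L1_loc \<alpha>" and \<beta>: "L1_loc \<beta>" and nonneg: "\<And>t. 0 \<le> \<beta> t"
    using assms(2) unfolding H1_def by auto
  have H1: "AE t in lborel. \<forall>z. 2 * (f t z \<bullet> z) \<le> \<alpha> t * (norm z)\<^sup>2 + \<beta> t"
    using assms(1,2) by (rule H1_AE_all)
  obtain \<gamma> K where "\<gamma> > 0" "K \<ge> 1"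
    and decay: "\<And>s t. 0 \<le> s \<Longrightarrow> s \<le> t \<Longrightarrow> exp (integral {s..t} \<alpha>) \<le> K * exp (- \<gamma> * (t - s))"
    using assms(4) unfolding H2star_def by blast
  obtain B where "B \<ge> 0" and B: "\<And>p q. p \<le> q \<Longrightarrow> q \<le> p + 1 \<Longrightarrow> integral {p..q} \<beta> \<le> B"
    using H3_unit_interval_bound[OF assms(3) \<beta> nonneg] by blast
  define M where "M = exp (integral {min \<tau> 0..0} (\<lambda>u. \<bar>\<alpha> u\<bar>))"
  define J where "J = integral {min \<tau> 0..0} \<beta>"
  have "0 \<le> J"
    using \<beta> nonneg unfolding J_def L1_loc_def absolutely_integrable_on_def by (auto intro: integral_nonneg)
  show ?thesis
  proof (rule that[of \<gamma> "K * exp (\<gamma> * \<bar>\<tau>\<bar>) * M * (1 + J)" "K * B / (1 - exp (- \<gamma>))"])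
    show "\<gamma> > 0" "K * exp (\<gamma> * \<bar>\<tau>\<bar>) * M * (1 + J) \<ge> 0" "K * B / (1 - exp (- \<gamma>)) \<ge> 0"
      using \<open>\<gamma> > 0\<close> \<open>K \<ge> 1\<close> \<open>B \<ge> 0\<close> \<open>0 \<le> J\<close> by (simp_all add: M_def)
  qed (use \<open>\<gamma> > 0\<close> \<open>K \<ge> 1\<close> solution_norm_sq_uniform_decay[OF _ H1 \<alpha> \<beta> nonneg \<open>\<gamma> > 0\<close> _ decay B]
       in \<open>auto simp: M_def J_def\<close>)
qed

lemma uub_if_exponential_estimate:
  fixes f :: "real \<Rightarrow> 'a::euclidean_space \<Rightarrow> 'a"
  assumes "\<gamma> > 0" "\<Gamma> \<ge> 0" "C \<ge> 0"
    and estimate: "\<And>r x0 x t. \<tau> \<le> r \<Longrightarrow> t0 \<le> t \<Longrightarrow> is_solution f r x0 x \<Longrightarrow>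
       (norm (x (t + r)))\<^sup>2 \<le> \<Gamma> * ((norm x0)\<^sup>2 + 1) * exp (- \<gamma> * t) + C"
  shows "uub f \<tau>"
  unfolding uub_def
proof (rule exI[of _ "sqrt (C + 1)"], intro conjI allI impI)
  show "sqrt (C + 1) > 0"
    using \<open>C \<ge> 0\<close> by simp
  fix d :: real assume "d > 0"
  define G where "G = \<Gamma> * (d\<^sup>2 + 1)"
  have "G \<ge> 0"
    using \<open>\<Gamma> \<ge> 0\<close> by (simp add: G_def)
  define T where "T = max t0 (G / \<gamma>) + 1"
  have "0 \<le> G / \<gamma>"
    using \<open>G \<ge> 0\<close> \<open>\<gamma> > 0\<close> by simp
  then have "T > 0"
    unfolding T_def by linarith
  moreover have "norm (x (t + r)) \<le> sqrt (C + 1)"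
    if "\<tau> \<le> r" "T \<le> t" "norm x0 \<le> d" "is_solution f r x0 x" for r x0 x t
  proof -
    have "\<Gamma> * ((norm x0)\<^sup>2 + 1) \<le> G"
      unfolding G_def using \<open>norm x0 \<le> d\<close> \<open>\<Gamma> \<ge> 0\<close> by (intro mult_left_mono) (auto intro: power_mono)
    moreover have "exp (- \<gamma> * t) \<le> 1 / (G + 1)"
    proof -
      have "G / \<gamma> \<le> t"
        using \<open>T \<le> t\<close> unfolding T_def by linarith
      then have "G \<le> \<gamma> * t"
        using \<open>\<gamma> > 0\<close> by (simp add: pos_divide_le_eq mult.commute)
      then have "G + 1 \<le> exp (\<gamma> * t)"
        using exp_ge_add_one_self[of "\<gamma> * t"] by linarith
      then show ?thesis
        using \<open>G \<ge> 0\<close> by (simp add: exp_minus field_simps)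
    qed
    ultimately have "\<Gamma> * ((norm x0)\<^sup>2 + 1) * exp (- \<gamma> * t) \<le> G * (1 / (G + 1))"
      using \<open>G \<ge> 0\<close> by (intro mult_mono) auto
    also have "\<dots> \<le> 1"
      using \<open>G \<ge> 0\<close> by simp
    finally have small: "\<Gamma> * ((norm x0)\<^sup>2 + 1) * exp (- \<gamma> * t) \<le> 1" .
    have "t0 \<le> t"
      using \<open>T \<le> t\<close> unfolding T_def by linarith
    then have "(norm (x (t + r)))\<^sup>2 \<le> C + 1"
      using estimate[OF \<open>\<tau> \<le> r\<close> _ \<open>is_solution f r x0 x\<close>] small by fastforce
    then show ?thesis
      by (rule real_le_rsqrt)
  qed
  ultimately show "\<exists>T>0. \<forall>r x0 x t. \<tau> \<le> r \<longrightarrow> T \<le> t \<longrightarrow> norm x0 \<le> d \<longrightarrow> is_solution f r x0 x \<longrightarrow>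
      norm (x (t + r)) \<le> sqrt (C + 1)"
    by blast
qed

theorem theorem6p5:
  fixes f :: "real \<Rightarrow> 'a::euclidean_space \<Rightarrow> 'a" and \<alpha> \<beta> :: "real \<Rightarrow> real"
  assumes "LC f" and "H1 f \<alpha> \<beta>" and "H3 \<beta>" and "H2star \<alpha>"
  shows "\<forall>\<tau>. uub f \<tau>"
proof
  fix \<tau> :: real
  obtain \<gamma> \<Gamma> C where "\<gamma> > 0" "\<Gamma> \<ge> 0" "C \<ge> 0"
    and "\<And>r x0 x t. \<tau> \<le> r \<Longrightarrow> \<bar>\<tau>\<bar> \<le> t \<Longrightarrow> is_solution f r x0 x \<Longrightarrow>
       (norm (x (t + r)))\<^sup>2 \<le> \<Gamma> * ((norm x0)\<^sup>2 + 1) * exp (- \<gamma> * t) + C"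
    using solution_exponential_estimate[OF assms] by blast
  then show "uub f \<tau>"
    by (rule uub_if_exponential_estimate)
qed

end
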